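(* Let $k\ge 1$. Let $\mathcal M^\Box_{2k+1,0}$ (resp. $\mathcal M^\Box_{2k+1,1}$) be the set of elements of $\mathcal M^\Box_{2k+1}$ whose central square $k+1$ is land (resp. water). Then $\mathrm{red}\circ\mathrm{contr}$ restricts to bijections $\mathcal M^\Box_{2k+1,0}\to\mathcal N_k$ and $\mathcal M^\Box_{2k+1,1}\to \mathcal N_{k,1}\cup\mathcal N_{k,2}\cup\{R_{\mathrm{land}}\}$. Consequently $M^\Box_{2k+1} = N_k + N_{k,1}+N_{k,2}+1$.
   Context: Colorings. Each square is colored water or land. Two distinct squares are adjacent if they share an edge after all edge identifications; a set of squares is connected if its induced adjacency graph is connected (empty set counts as connected). (N1): the water is connected. For an interior (non-boundary) vertex $v$, its square-degree is the number of distinct squares having $v$ as a corner. (N2$\Box$): no interior vertex of square-degree $4$ has all incident squares water. A $2\times k$ Nurikabe rectangle is a coloring of the $2\times k$ grid (columns $1,\dots,k$ left to right, no identifications) with connected water and no $2\times 2$ block of water squares; $\mathcal N_k$ is the set of these, $N_k=|\mathcal N_k|$; $\mathcal N_{k,i}$ is the subset with exactly $i$ water squares in column $k$, $N_{k,i}=|\mathcal N_{k,i}|$. $R_{\mathrm{land}}\in\mathcal N_k$ is the all-land rectangle. Tile $[0,n]\times[0,1]$ by unit squares $[j-1,j]\times[0,1]$, called square $j$. The $1\times n$ Möbius strip identifies $(x,1)\sim(n-x,0)$ for $x\in[0,n]$; its boundary is the image of the vertical sides. $\mathcal M^\Box_n$ is the set of colorings of the $1\times n$ Möbius strip satisfying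 (N1) and (N2$\Box$), $M^\Box_n=|\mathcal M^\Box_n|$. Contraction: for a coloring of the $1\times(2k+1)$ Möbius strip, $\mathrm{contr}$ gives the coloring of the $1\times 2k$ Möbius strip obtained by deleting square $k+1$, with square $j\le k$ keeping position $j$ and square $j\ge k+2$ moving to position $j-1$. Rectangular reduction: for a coloring of the $1\times 2k$ Möbius strip, $\mathrm{red}$ gives the coloring of the $2\times k$ grid whose column $j$ has top square colored as square $j$ and bottom square colored as square $2k+1-j$. *)

theory Defs
  imports Main
begin

(* Colourings: True = water, False = land. *)

definition connected_in :: "('a \<Rightarrow> 'a \<Rightarrow> bool) \<Rightarrow> 'a set \<Rightarrow> bool" where
  "connected_in adj S \<longleftrightarrow>
     (\<forall>a\<in>S. \<forall>b\<in>S. (a, b) \<in> {(x, y). x \<in> S \<and> y \<in> S \<and> adj x y}\<^sup>*)"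

(* Squares are 1..n (square j = [j-1,j]x[0,1]). Under (x,1) ~ (n-x,0), the top side
   of square j is glued to the bottom side of square n+1-j; squares j, j+1 share a
   vertical side. *)
definition mob_adj :: "nat \<Rightarrow> nat \<Rightarrow> nat \<Rightarrow> bool" where
  "mob_adj n a b \<longleftrightarrow> a \<in> {1..n} \<and> b \<in> {1..n} \<and> a \<noteq> b \<and>
     (a + 1 = b \<or> b + 1 = a \<or> a + b = n + 1)"

definition mob_colourings :: "nat \<Rightarrow> (nat \<Rightarrow> bool) set" where
  "mob_colourings n = {c. \<forall>j. j \<notin> {1..n} \<longrightarrow> \<not> c j}"

definition mob_water :: "nat \<Rightarrow> (nat \<Rightarrow> bool) \<Rightarrow> nat set" where
  "mob_water n c = {j \<in> {1..n}. c j}"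

(* Interior vertices: the classes {(i,0),(n-i,1)} for 1 <= i <= n-1 (the points with
   x = 0 or x = n lie on the boundary). Squares having vertex i as a corner:
   bottom corners of squares i, i+1 and top corners of squares n-i, n-i+1. *)
definition mob_vertex_squares :: "nat \<Rightarrow> nat \<Rightarrow> nat set" where
  "mob_vertex_squares n i = {i, i + 1, n - i, n + 1 - i}"

definition mob_square_degree :: "nat \<Rightarrow> nat \<Rightarrow> nat" where
  "mob_square_degree n i = card (mob_vertex_squares n i)"

definition mob_N1 :: "nat \<Rightarrow> (nat \<Rightarrow> bool) \<Rightarrow> bool" where
  "mob_N1 n c \<longleftrightarrow> connected_in (mob_adj n) (mob_water n c)"

definition mob_N2box :: "nat \<Rightarrow> (nat \<Rightarrow> bool) \<Rightarrow> bool" where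
  "mob_N2box n c \<longleftrightarrow>
     (\<forall>i\<in>{1..n-1}. mob_square_degree n i = 4 \<longrightarrow> \<not> (\<forall>s\<in>mob_vertex_squares n i. c s))"

definition Mbox :: "nat \<Rightarrow> (nat \<Rightarrow> bool) set" where
  "Mbox n = {c \<in> mob_colourings n. mob_N1 n c \<and> mob_N2box n c}"

(* Squares (r, j), r \<in> {1,2} (1 = top, 2 = bottom), j \<in> {1..k} (column). *)
definition grid_adj :: "nat \<Rightarrow> nat \<times> nat \<Rightarrow> nat \<times> nat \<Rightarrow> bool" where
  "grid_adj k a b \<longleftrightarrow> fst a \<in> {1,2} \<and> fst b \<in> {1,2} \<and> snd a \<in> {1..k} \<and> snd b \<in> {1..k} \<and>
     ((fst a = fst b \<and> (snd a + 1 = snd b \<or> snd b + 1 = snd a)) \<or>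
      (snd a = snd b \<and> fst a \<noteq> fst b))"

definition grid_colourings :: "nat \<Rightarrow> (nat \<times> nat \<Rightarrow> bool) set" where
  "grid_colourings k = {g. \<forall>r j. (r \<notin> {1,2} \<or> j \<notin> {1..k}) \<longrightarrow> \<not> g (r, j)}"

definition grid_water :: "nat \<Rightarrow> (nat \<times> nat \<Rightarrow> bool) \<Rightarrow> (nat \<times> nat) set" where
  "grid_water k g = {(r, j). r \<in> {1,2} \<and> j \<in> {1..k} \<and> g (r, j)}"

definition Nrect :: "nat \<Rightarrow> (nat \<times> nat \<Rightarrow> bool) set" where
  "Nrect k = {g \<in> grid_colourings k. connected_in (grid_adj k) (grid_water k g) \<and>
      \<not> (\<exists>j\<in>{1..<k}. g (1, j) \<and> g (2, j) \<and> g (1, j + 1) \<and> g (2, j + 1))}"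

definition Nrect_col :: "nat \<Rightarrow> nat \<Rightarrow> (nat \<times> nat \<Rightarrow> bool) set" where
  "Nrect_col k i = {g \<in> Nrect k. card {r \<in> {1::nat,2}. g (r, k)} = i}"

definition R_land :: "nat \<times> nat \<Rightarrow> bool" where
  "R_land = (\<lambda>_. False)"

definition contr :: "nat \<Rightarrow> (nat \<Rightarrow> bool) \<Rightarrow> (nat \<Rightarrow> bool)" where
  "contr k c = (\<lambda>j. if j \<in> {1..2*k} then (if j \<le> k then c j else c (j + 1)) else False)"

definition red :: "nat \<Rightarrow> (nat \<Rightarrow> bool) \<Rightarrow> (nat \<times> nat \<Rightarrow> bool)" where
  "red k c = (\<lambda>(r, j). if j \<in> {1..k} then
                        (if r = 1 then c j else if r = 2 then c (2*k + 1 - j) else False)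
                      else False)"

end

theory Submission
  imports Defs
begin

(* Deleting the central square k+1 and folding the remaining squares into two rows (square j <= k
   on top of square 2k+2-j) identifies the Moebius adjacencies among the other squares with the
   grid adjacencies, and the interior vertices of square-degree 4 with the 2x2 blocks (vertices i
   and 2k+1-i have the same four squares). The central square only meets squares k and k+2, which
   are adjacent to each other, so it can be removed from or added to the water without changing
   connectivity: a water centre needs water in column k unless it is the only water square. *)

lemma rtrancl_map_rel:
  assumes "(a, b) \<in> R\<^sup>*" and "\<And>x y. (x, y) \<in> R \<Longrightarrow> (f x, f y) \<in> R'"
  shows "(f a, f b) \<in> R'\<^sup>*"
  using assms(1) by induction (auto intro: rtrancl_into_rtrancl assms(2))

lemma connected_in_image:
  assumes "connected_in adj S"
    and "\<And>x y. x \<in> S \<Longrightarrow> y \<in> S \<Longrightarrow> adj x y \<Longrightarrow> adj' (f x) (f y)"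
  shows "connected_in adj' (f ` S)"
  unfolding connected_in_def
proof (intro ballI)
  fix a' b' assume "a' \<in> f ` S" "b' \<in> f ` S"
  then obtain a b where ab: "a \<in> S" "b \<in> S" "a' = f a" "b' = f b" by auto
  have "(a, b) \<in> {(x, y). x \<in> S \<and> y \<in> S \<and> adj x y}\<^sup>*"
    using assms(1) ab unfolding connected_in_def by auto
  then show "(a', b') \<in> {(x, y). x \<in> f ` S \<and> y \<in> f ` S \<and> adj' x y}\<^sup>*"
    unfolding ab by (rule rtrancl_map_rel) (use assms(2) in auto)
qed

lemma connected_in_insert:
  assumes "connected_in adj W" "x \<in> W" "adj x c" "adj c x"
  shows "connected_in adj (insert c W)"
  unfolding connected_in_def
proof (intro ballI)
  let ?R = "{(x, y). x \<in> insert c W \<and> y \<in> insert c W \<and> adj x y}"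
  have W: "(a, b) \<in> ?R\<^sup>*" if "a \<in> W" "b \<in> W" for a b
  proof -
    have "(a, b) \<in> {(x, y). x \<in> W \<and> y \<in> W \<and> adj x y}\<^sup>*"
      using assms(1) that unfolding connected_in_def by blast
    then show ?thesis by (rule rtrancl_mono[THEN subsetD, rotated]) auto
  qed
  have cx: "(c, x) \<in> ?R" "(x, c) \<in> ?R" using assms by auto
  fix a b assume "a \<in> insert c W" "b \<in> insert c W"
  then consider "a = c" "b = c" | "a = c" "b \<in> W" | "a \<in> W" "b = c" | "a \<in> W" "b \<in> W" by auto
  then show "(a, b) \<in> ?R\<^sup>*"
    by cases (use W assms(2) cx in \<open>auto intro: converse_rtrancl_into_rtrancl rtrancl_into_rtrancl\<close>)
qed

lemma connected_in_remove:
  assumes "connected_in adj (insert c W)" "c \<notin> W"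
    and clique: "\<And>z y. z \<in> W \<Longrightarrow> y \<in> W \<Longrightarrow> adj z c \<Longrightarrow> adj c y \<Longrightarrow> z \<noteq> y \<Longrightarrow> adj z y"
  shows "connected_in adj W"
  unfolding connected_in_def
proof (intro ballI)
  let ?R = "{(x, y). x \<in> W \<and> y \<in> W \<and> adj x y}"
  let ?R' = "{(x, y). x \<in> insert c W \<and> y \<in> insert c W \<and> adj x y}"
  fix a b assume a: "a \<in> W" and b: "b \<in> W"
  have "(a, b) \<in> ?R'\<^sup>*" using assms(1) a b unfolding connected_in_def by blast
  \<comment> \<open>a path through c is shortened by the edge between the neighbours of c it uses\<close>
  then have "(b \<in> W \<and> (a, b) \<in> ?R\<^sup>*) \<or> (b = c \<and> (\<exists>z\<in>W. adj z c \<and> (a, z) \<in> ?R\<^sup>*))"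
  proof induction
    case base then show ?case using a by simp
  next
    case (step y y')
    then have y: "y \<in> insert c W" "y' \<in> insert c W" "adj y y'" by auto
    from step.IH show ?case
    proof
      assume "y \<in> W \<and> (a, y) \<in> ?R\<^sup>*"
      then show ?case using y by (cases "y' = c") (auto intro: rtrancl_into_rtrancl)
    next
      assume "y = c \<and> (\<exists>z\<in>W. adj z c \<and> (a, z) \<in> ?R\<^sup>*)"
      then obtain z where z: "y = c" "z \<in> W" "adj z c" "(a, z) \<in> ?R\<^sup>*" by auto
      show ?case
      proof (cases "y' = c \<or> y' = z")
        case True then show ?thesis using z by auto
      next
        case False
        then have "(z, y') \<in> ?R" using clique[of z y'] z y by auto
        then show ?thesis using z(4) by (auto intro: rtrancl_into_rtrancl)
      qed
    qed
  qed
  then show "(a, b) \<in> ?R\<^sup>*" using b assms(2) by auto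
qed

lemma connected_in_insert_has_neighbour:
  assumes "connected_in adj (insert c W)" "a \<in> W" "c \<notin> W" "\<not> adj c c"
  shows "\<exists>x\<in>W. adj c x"
proof -
  let ?R = "{(x, y). x \<in> insert c W \<and> y \<in> insert c W \<and> adj x y}"
  have "(c, a) \<in> ?R\<^sup>*" "c \<noteq> a" using assms unfolding connected_in_def by auto
  then obtain y where "(c, y) \<in> ?R" by (auto elim: converse_rtranclE)
  then show ?thesis using assms(4) by auto
qed

lemma connected_in_insert_iff:
  assumes "c \<notin> W" "\<not> adj c c" "\<And>x. adj x c \<longleftrightarrow> adj c x"
    and clique: "\<And>z y. z \<in> W \<Longrightarrow> y \<in> W \<Longrightarrow> adj z c \<Longrightarrow> adj c y \<Longrightarrow> z \<noteq> y \<Longrightarrow> adj z y"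
  shows "connected_in adj (insert c W) \<longleftrightarrow> W = {} \<or> (connected_in adj W \<and> (\<exists>x\<in>W. adj c x))"
proof
  assume conn: "connected_in adj (insert c W)"
  show "W = {} \<or> (connected_in adj W \<and> (\<exists>x\<in>W. adj c x))"
  proof (cases "W = {}")
    case False
    then obtain a where "a \<in> W" by blast
    then show ?thesis
      using connected_in_remove[OF conn assms(1) clique]
        connected_in_insert_has_neighbour[OF conn _ assms(1,2)] by simp
  qed simp
next
  assume "W = {} \<or> (connected_in adj W \<and> (\<exists>x\<in>W. adj c x))"
  then show "connected_in adj (insert c W)"
  proof
    assume "W = {}"
    then show ?thesis by (simp add: connected_in_def)
  next
    assume "connected_in adj W \<and> (\<exists>x\<in>W. adj c x)"
    then obtain x where "connected_in adj W" "x \<in> W" "adj c x" by blast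
    then show ?thesis using connected_in_insert[of adj W x c] assms(3)[of x] by simp
  qed
qed

lemma finite_bool_funs_vanishing_outside:
  assumes "finite A"
  shows "finite {f :: 'a \<Rightarrow> bool. \<forall>x. x \<notin> A \<longrightarrow> \<not> f x}"
proof (rule finite_subset)
  show "{f. \<forall>x. x \<notin> A \<longrightarrow> \<not> f x} \<subseteq> (\<lambda>S x. x \<in> S) ` Pow A"
  proof
    fix f assume "f \<in> {f. \<forall>x. x \<notin> A \<longrightarrow> \<not> f x}"
    then show "f \<in> (\<lambda>S x. x \<in> S) ` Pow A"
      by (intro image_eqI[where x = "{x \<in> A. f x}"]) auto
  qed
qed (use assms in simp)

definition mob_to_grid :: "nat \<Rightarrow> nat \<Rightarrow> nat \<times> nat" where
  "mob_to_grid k j = (if j \<le> k then (1, j) else (2, 2*k + 2 - j))"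

definition grid_to_mob :: "nat \<Rightarrow> nat \<times> nat \<Rightarrow> nat" where
  "grid_to_mob k p = (if fst p = 1 then snd p else 2*k + 2 - snd p)"

lemma red_contr:
  "red k (contr k c) = (\<lambda>(r, j). if j \<in> {1..k} then
     (if r = 1 then c j else if r = 2 then c (2*k + 2 - j) else False) else False)"
  by (rule ext) (auto simp: red_def contr_def Suc_diff_le)

lemma red_contr_in_grid_colourings: "red k (contr k c) \<in> grid_colourings k"
  by (auto simp: red_contr grid_colourings_def)

lemma grid_water_red_contr:
  "grid_water k (red k (contr k c)) = mob_to_grid k ` (mob_water (2*k + 1) c - {k + 1})"
proof (intro equalityI subsetI)
  fix p assume "p \<in> grid_water k (red k (contr k c))"
  then show "p \<in> mob_to_grid k ` (mob_water (2*k + 1) c - {k + 1})"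
    by (intro image_eqI[where x = "grid_to_mob k p"])
      (auto simp: red_contr grid_water_def mob_water_def mob_to_grid_def grid_to_mob_def)
qed (auto simp: red_contr grid_water_def mob_water_def mob_to_grid_def)

lemma mob_water_minus_centre:
  "mob_water (2*k + 1) c - {k + 1} = grid_to_mob k ` grid_water k (red k (contr k c))"
proof -
  have "grid_to_mob k (mob_to_grid k j) = j" if "j \<in> mob_water (2*k + 1) c - {k + 1}" for j
    using that by (auto simp: mob_water_def grid_to_mob_def mob_to_grid_def)
  then show ?thesis
    unfolding grid_water_red_contr image_image by simp
qed

lemma grid_adj_mob_to_grid:
  assumes "x \<in> {1..2*k + 1} - {k + 1}" "y \<in> {1..2*k + 1} - {k + 1}" "mob_adj (2*k + 1) x y"
  shows "grid_adj k (mob_to_grid k x) (mob_to_grid k y)"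
  using assms by (auto simp: mob_adj_def grid_adj_def mob_to_grid_def)

lemma mob_adj_grid_to_mob:
  assumes "fst p \<in> {1, 2}" "snd p \<in> {1..k}" "fst q \<in> {1, 2}" "snd q \<in> {1..k}" "grid_adj k p q"
  shows "mob_adj (2*k + 1) (grid_to_mob k p) (grid_to_mob k q)"
  using assms by (auto simp: mob_adj_def grid_adj_def grid_to_mob_def)

lemma connected_mob_water_minus_centre_iff:
  "connected_in (mob_adj (2*k + 1)) (mob_water (2*k + 1) c - {k + 1}) \<longleftrightarrow>
   connected_in (grid_adj k) (grid_water k (red k (contr k c)))"
proof
  assume "connected_in (mob_adj (2*k + 1)) (mob_water (2*k + 1) c - {k + 1})"
  then show "connected_in (grid_adj k) (grid_water k (red k (contr k c)))"
    unfolding grid_water_red_contr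
    by (rule connected_in_image) (use grid_adj_mob_to_grid in \<open>auto simp: mob_water_def\<close>)
next
  assume "connected_in (grid_adj k) (grid_water k (red k (contr k c)))"
  then show "connected_in (mob_adj (2*k + 1)) (mob_water (2*k + 1) c - {k + 1})"
    unfolding mob_water_minus_centre
    by (rule connected_in_image) (use mob_adj_grid_to_mob in \<open>auto simp: grid_water_def\<close>)
qed

lemma mob_N1_centre_land_iff:
  assumes "\<not> c (k + 1)"
  shows "mob_N1 (2*k + 1) c \<longleftrightarrow> connected_in (grid_adj k) (grid_water k (red k (contr k c)))"
proof -
  have "mob_water (2*k + 1) c - {k + 1} = mob_water (2*k + 1) c"
    using assms by (auto simp: mob_water_def)
  then show ?thesis
    using connected_mob_water_minus_centre_iff[of k c] by (simp add: mob_N1_def)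
qed

lemma mob_N1_centre_water_iff:
  assumes "k \<ge> 1" "c (k + 1)"
  shows "mob_N1 (2*k + 1) c \<longleftrightarrow> grid_water k (red k (contr k c)) = {} \<or>
     (connected_in (grid_adj k) (grid_water k (red k (contr k c))) \<and>
      (red k (contr k c) (1, k) \<or> red k (contr k c) (2, k)))"
proof -
  define W where "W = mob_water (2*k + 1) c - {k + 1}"
  have water: "mob_water (2*k + 1) c = insert (k + 1) W"
    using assms by (auto simp: mob_water_def W_def)
  have empty: "W = {} \<longleftrightarrow> grid_water k (red k (contr k c)) = {}"
    unfolding W_def grid_water_red_contr by simp
  have "2*k + 2 - k = k + 2" by simp
  then have neighbour: "(\<exists>x\<in>W. mob_adj (2*k + 1) (k + 1) x) \<longleftrightarrow>
      red k (contr k c) (1, k) \<or> red k (contr k c) (2, k)"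
    using assms(1) by (auto simp: W_def mob_water_def mob_adj_def red_contr)
  have "connected_in (mob_adj (2*k + 1)) (insert (k + 1) W) \<longleftrightarrow>
      W = {} \<or> (connected_in (mob_adj (2*k + 1)) W \<and> (\<exists>x\<in>W. mob_adj (2*k + 1) (k + 1) x))"
    by (rule connected_in_insert_iff) (auto simp: W_def mob_water_def mob_adj_def)
  then show ?thesis
    unfolding mob_N1_def water empty neighbour
    using connected_mob_water_minus_centre_iff unfolding W_def by simp
qed

lemma mob_square_degree_eq_4_iff:
  assumes "i \<in> {1..2*k}"
  shows "mob_square_degree (2*k + 1) i = 4 \<longleftrightarrow> i \<noteq> k \<and> i \<noteq> k + 1"
proof (cases "i = k \<or> i = k + 1")
  case True
  then have "mob_vertex_squares (2*k + 1) i = {k, k + 1, k + 2}"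
    by (auto simp: mob_vertex_squares_def)
  then show ?thesis using True by (simp add: mob_square_degree_def)
next
  case False
  then show ?thesis using assms
    by (auto simp: mob_square_degree_def mob_vertex_squares_def card_insert_if)
qed

lemma mob_vertex_squares_reflect:
  "i \<le> n \<Longrightarrow> mob_vertex_squares n (n - i) = mob_vertex_squares n i"
  by (auto simp: mob_vertex_squares_def)

lemma mob_N2box_odd_iff:
  "mob_N2box (2*k + 1) c \<longleftrightarrow> (\<forall>i\<in>{1..<k}. \<not> (\<forall>s\<in>mob_vertex_squares (2*k + 1) i. c s))"
proof -
  have "(\<exists>i\<in>{1..2*k}. i \<noteq> k \<and> i \<noteq> k + 1 \<and> (\<forall>s\<in>mob_vertex_squares (2*k + 1) i. c s)) \<longleftrightarrow>
        (\<exists>i\<in>{1..<k}. \<forall>s\<in>mob_vertex_squares (2*k + 1) i. c s)"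
  proof
    assume "\<exists>i\<in>{1..2*k}. i \<noteq> k \<and> i \<noteq> k + 1 \<and> (\<forall>s\<in>mob_vertex_squares (2*k + 1) i. c s)"
    then obtain i where i: "i \<in> {1..2*k}" "i \<noteq> k" "i \<noteq> k + 1"
      and water: "\<forall>s\<in>mob_vertex_squares (2*k + 1) i. c s" by blast
    show "\<exists>i\<in>{1..<k}. \<forall>s\<in>mob_vertex_squares (2*k + 1) i. c s"
    proof (cases "i < k")
      case True then show ?thesis using i water by auto
    next
      case False
      then show ?thesis
        using i water mob_vertex_squares_reflect[of i "2*k + 1"]
        by (intro bexI[where x = "2*k + 1 - i"]) auto
    qed
  qed auto
  then show ?thesis
    unfolding mob_N2box_def using mob_square_degree_eq_4_iff by auto
qed

lemma mob_vertex_water_iff_water_block: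
  assumes "i \<in> {1..<k}"
  shows "(\<forall>s\<in>mob_vertex_squares (2*k + 1) i. c s) \<longleftrightarrow>
    red k (contr k c) (1, i) \<and> red k (contr k c) (2, i) \<and>
    red k (contr k c) (1, i + 1) \<and> red k (contr k c) (2, i + 1)"
proof -
  have "2*k + 2 - (i + 1) = 2*k + 1 - i" by simp
  then show ?thesis
    using assms by (auto simp: mob_vertex_squares_def red_contr)
qed

lemma mob_N2box_iff_no_water_block:
  "mob_N2box (2*k + 1) c \<longleftrightarrow>
    \<not> (\<exists>j\<in>{1..<k}. red k (contr k c) (1, j) \<and> red k (contr k c) (2, j) \<and>
        red k (contr k c) (1, j + 1) \<and> red k (contr k c) (2, j + 1))"
  unfolding mob_N2box_odd_iff using mob_vertex_water_iff_water_block by blast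

lemma grid_water_empty_iff:
  assumes "g \<in> grid_colourings k"
  shows "grid_water k g = {} \<longleftrightarrow> g = R_land"
proof
  assume empty: "grid_water k g = {}"
  show "g = R_land"
  proof
    fix p :: "nat \<times> nat"
    obtain r j where "p = (r, j)" by force
    then show "g p = R_land p"
      using empty assms unfolding grid_water_def grid_colourings_def R_land_def
      by (cases "r \<in> {1, 2} \<and> j \<in> {1..k}") auto
  qed
qed (auto simp: grid_water_def R_land_def)

lemma card_two_rows:
  "card {r \<in> {1::nat, 2}. P r} = (if P 1 then 1 else 0) + (if P 2 then 1 else 0)"
proof -
  have "{r \<in> {1::nat, 2}. P r} = (if P 1 then {1} else {}) \<union> (if P 2 then {2} else {})" by auto
  then show ?thesis by auto
qed

lemma Nrect_col_1_Un_2: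
  "Nrect_col k 1 \<union> Nrect_col k 2 = {g \<in> Nrect k. g (1, k) \<or> g (2, k)}"
  unfolding Nrect_col_def card_two_rows by auto

lemma R_land_in_Nrect: "R_land \<in> Nrect k"
  by (auto simp: Nrect_def R_land_def grid_colourings_def grid_water_def connected_in_def)

lemma Mbox_centre_land_iff:
  assumes "c \<in> mob_colourings (2*k + 1)" "\<not> c (k + 1)"
  shows "c \<in> Mbox (2*k + 1) \<longleftrightarrow> red k (contr k c) \<in> Nrect k"
  using assms mob_N1_centre_land_iff mob_N2box_iff_no_water_block red_contr_in_grid_colourings
  unfolding Mbox_def Nrect_def by blast

lemma Mbox_centre_water_iff:
  assumes "k \<ge> 1" "c \<in> mob_colourings (2*k + 1)" "c (k + 1)"
  shows "c \<in> Mbox (2*k + 1) \<longleftrightarrow> red k (contr k c) \<in> Nrect_col k 1 \<union> Nrect_col k 2 \<union> {R_land}"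
  unfolding Nrect_col_1_Un_2
  using assms mob_N1_centre_water_iff[of k c] mob_N2box_iff_no_water_block[of k c]
    grid_water_empty_iff[OF red_contr_in_grid_colourings] R_land_in_Nrect red_contr_in_grid_colourings
  unfolding Mbox_def Nrect_def by auto

lemma red_contr_injective:
  assumes "c \<in> mob_colourings (2*k + 1)" "c' \<in> mob_colourings (2*k + 1)" "c (k + 1) = c' (k + 1)"
    and "red k (contr k c) = red k (contr k c')"
  shows "c = c'"
proof
  fix j
  have top: "red k (contr k c) (1, j) = red k (contr k c') (1, j)"
    and bottom: "red k (contr k c) (2, 2*k + 2 - j) = red k (contr k c') (2, 2*k + 2 - j)"
    using assms(4) by auto
  consider "j \<in> {1..k}" | "j = k + 1" | "j \<in> {k + 2..2*k + 1}" | "j \<notin> {1..2*k + 1}" by force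
  then show "c j = c' j"
  proof cases
    case 1 then show ?thesis using top by (simp add: red_contr)
  next
    case 2 then show ?thesis using assms(3) by simp
  next
    case 3
    then have "2*k + 2 - j \<in> {1..k}" "2*k + 2 - (2*k + 2 - j) = j" by auto
    then show ?thesis using bottom unfolding red_contr by (simp del: atLeastAtMost_iff)
  next
    case 4 then show ?thesis using assms(1,2) by (simp add: mob_colourings_def)
  qed
qed

lemma red_contr_surjective:
  assumes "g \<in> grid_colourings k"
  shows "\<exists>c \<in> mob_colourings (2*k + 1). c (k + 1) = b \<and> red k (contr k c) = g"
proof -
  define c where "c j = (if j \<in> {1..k} then g (1, j) else if j = k + 1 then b
     else if j \<in> {k + 2..2*k + 1} then g (2, 2*k + 2 - j) else False)" for j
  have "red k (contr k c) = g"
  proof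
    fix p :: "nat \<times> nat"
    obtain r j where "p = (r, j)" by force
    then show "red k (contr k c) p = g p"
      using assms by (cases "j \<in> {1..k}") (auto simp: red_contr c_def grid_colourings_def)
  qed
  moreover have "c \<in> mob_colourings (2*k + 1)" "c (k + 1) = b"
    by (auto simp: c_def mob_colourings_def)
  ultimately show ?thesis by blast
qed

lemma bij_betw_red_contr_centre:
  "bij_betw (red k \<circ> contr k) {c \<in> mob_colourings (2*k + 1). c (k + 1) = b} (grid_colourings k)"
  unfolding bij_betw_def
proof (intro conjI inj_onI equalityI subsetI)
  fix c c' assume "c \<in> {c \<in> mob_colourings (2*k + 1). c (k + 1) = b}"
    "c' \<in> {c \<in> mob_colourings (2*k + 1). c (k + 1) = b}" "(red k \<circ> contr k) c = (red k \<circ> contr k) c'"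
  then show "c = c'" by (intro red_contr_injective[of c k c']) auto
next
  fix g assume "g \<in> grid_colourings k"
  then obtain c where "c \<in> mob_colourings (2*k + 1)" "c (k + 1) = b" "red k (contr k c) = g"
    using red_contr_surjective by blast
  then show "g \<in> (red k \<circ> contr k) ` {c \<in> mob_colourings (2*k + 1). c (k + 1) = b}" by force
qed (auto simp: red_contr_in_grid_colourings)

lemma bij_betw_red_contr_Mbox:
  assumes "G \<subseteq> grid_colourings k"
    and "\<And>c. c \<in> mob_colourings (2*k + 1) \<Longrightarrow> c (k + 1) = b \<Longrightarrow>
           c \<in> Mbox (2*k + 1) \<longleftrightarrow> red k (contr k c) \<in> G"
  shows "bij_betw (red k \<circ> contr k) {c \<in> Mbox (2*k + 1). c (k + 1) = b} G"
proof -
  have "bij_betw (red k \<circ> contr k)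
      {c \<in> {c \<in> mob_colourings (2*k + 1). c (k + 1) = b}. c \<in> Mbox (2*k + 1)}
      {g \<in> grid_colourings k. g \<in> G}"
    by (rule bij_betw_Collect[OF bij_betw_red_contr_centre]) (use assms(2) in auto)
  moreover have "{g \<in> grid_colourings k. g \<in> G} = G" using assms(1) by auto
  moreover have "{c \<in> {c \<in> mob_colourings (2*k + 1). c (k + 1) = b}. c \<in> Mbox (2*k + 1)} =
      {c \<in> Mbox (2*k + 1). c (k + 1) = b}" by (auto simp: Mbox_def)
  ultimately show ?thesis by simp
qed

lemma finite_Mbox: "finite (Mbox n)"
proof (rule finite_subset)
  show "Mbox n \<subseteq> mob_colourings n" by (auto simp: Mbox_def)
  show "finite (mob_colourings n)"
    unfolding mob_colourings_def by (rule finite_bool_funs_vanishing_outside) simp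
qed

lemma card_Nrect_col_1_2_R_land:
  assumes "finite (Nrect k)"
  shows "card (Nrect_col k 1 \<union> Nrect_col k 2 \<union> {R_land}) =
    card (Nrect_col k 1) + card (Nrect_col k 2) + 1"
proof -
  have "finite (Nrect_col k i)" for i
    using assms by (auto simp: Nrect_col_def)
  moreover have "Nrect_col k 1 \<inter> Nrect_col k 2 = {}" "R_land \<notin> Nrect_col k 1 \<union> Nrect_col k 2"
    by (auto simp: Nrect_col_def R_land_def)
  ultimately show ?thesis by (simp add: card_Un_disjoint)
qed

theorem lemma4p3:
  fixes k :: nat
  assumes "k \<ge> 1"
  shows "bij_betw (red k \<circ> contr k) {c \<in> Mbox (2*k+1). \<not> c (k+1)} (Nrect k)
       \<and> bij_betw (red k \<circ> contr k) {c \<in> Mbox (2*k+1). c (k+1)}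
           (Nrect_col k 1 \<union> Nrect_col k 2 \<union> {R_land})
       \<and> card (Mbox (2*k+1)) = card (Nrect k) + card (Nrect_col k 1) + card (Nrect_col k 2) + 1"
proof -
  have land: "bij_betw (red k \<circ> contr k) {c \<in> Mbox (2*k+1). \<not> c (k+1)} (Nrect k)"
    using bij_betw_red_contr_Mbox[of "Nrect k" k False] Mbox_centre_land_iff
    by (auto simp: Nrect_def)
  have water: "bij_betw (red k \<circ> contr k) {c \<in> Mbox (2*k+1). c (k+1)}
      (Nrect_col k 1 \<union> Nrect_col k 2 \<union> {R_land})"
    using bij_betw_red_contr_Mbox[of _ k True] Mbox_centre_water_iff[OF assms]
      R_land_in_Nrect by (auto simp: Nrect_col_def Nrect_def)
  have "card (Mbox (2*k+1)) = card {c \<in> Mbox (2*k+1). \<not> c (k+1)} + card {c \<in> Mbox (2*k+1). c (k+1)}"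
    using finite_Mbox by (subst card_Un_disjoint[symmetric]) (auto intro: arg_cong[where f = card])
  also have "\<dots> = card (Nrect k) + card (Nrect_col k 1 \<union> Nrect_col k 2 \<union> {R_land})"
    using bij_betw_same_card[OF land] bij_betw_same_card[OF water] by simp
  also have "\<dots> = card (Nrect k) + card (Nrect_col k 1) + card (Nrect_col k 2) + 1"
    using card_Nrect_col_1_2_R_land bij_betw_finite[OF land] finite_Mbox by simp
  finally show ?thesis using land water by simp
qed

end
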